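(* Let $1\le p\le\infty$. Fix a positive integer $N$ (bound on the number of intervals) and a real $\lambda>0$ (lower bound on total length). Then persistent entropy is continuous on $(\mathcal{B}_F,d_p)$ restricted to such barcodes: for every $\varepsilon>0$ there exists $\delta>0$ such that for all $A,B\in\mathcal{B}_F$ with at most $N$ intervals each and with total lengths $L_a,L_b\ge\lambda$, $d_p(A,B)\le\delta$ implies $|E(A)-E(B)|\le\varepsilon$.
   Context: A persistence barcode is a finite multiset of intervals $[x,y]$, $x\le y$; $\mathcal{B}_F$ is the set of barcodes all of whose intervals have finite endpoints. For $A=\{[x_i^a,y_i^a]\}_{i=1}^{n_a}$, $\ell_i^a=y_i^a-x_i^a$, $L_a=\sum_i\ell_i^a$. $p$-th Wasserstein distance: pad the smaller barcode with zero-length intervals $[t,t]$ until both have $n_{\max}=\max\{n_a,n_b\}$ intervals; $d_p(A,B)=\big(\min_\gamma\sum_i\max\{|x_i^a-x^b_{\gamma(i)}|^p,|y_i^a-y^b_{\gamma(i)}|^p\}\big)^{1/p}$ for $p<\infty$ and $d_\infty(A,B)=\min_\gamma\max_i\max\{|x_i^a-x^b_{\gamma(i)}|,|y_i^a-y^b_{\gamma(i)}|\}$, minima over bijections $\gamma$ (and paddings). Persistent entropy: $E(A)=-\sum_i\frac{\ell_i^a}{L_a}\log\frac{\ell_i^a}{L_a}$ with $0\log0=0$. *)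

theory Defs
  imports "HOL-Analysis.Analysis" "HOL-Library.Multiset" "HOL-Library.Extended_Real"
begin

text \<open>An interval [x,y] is a pair (x,y) of reals; a barcode in B_F is a finite
  multiset of such pairs with x \<le> y.\<close>

type_synonym barcode = "(real \<times> real) multiset"

definition is_barcode :: "barcode \<Rightarrow> bool" where
  "is_barcode A \<longleftrightarrow> (\<forall>I\<in>#A. fst I \<le> snd I)"

definition int_length :: "real \<times> real \<Rightarrow> real" where
  "int_length I = snd I - fst I"

definition total_length :: "barcode \<Rightarrow> real" where
  "total_length A = (\<Sum>I\<in>#A. int_length I)"

definition pers_entropy :: "barcode \<Rightarrow> real" where
  "pers_entropy A = - (\<Sum>I\<in>#A. (let q = int_length I / total_length A in
                                   if q = 0 then 0 else q * ln q))"

definition paddings :: "barcode \<Rightarrow> nat \<Rightarrow> (real \<times> real) list set" where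
  "paddings A n = {xs. length xs = n \<and>
     (\<exists>ys zs. xs = ys @ zs \<and> mset ys = A \<and> (\<forall>z\<in>set zs. fst z = snd z))}"

definition match_cost :: "ereal \<Rightarrow> nat \<Rightarrow> (real \<times> real) list \<Rightarrow> (real \<times> real) list
                          \<Rightarrow> (nat \<Rightarrow> nat) \<Rightarrow> real" where
  "match_cost p n as bs \<gamma> =
     (if p = \<infinity> then
        (if n = 0 then 0 else
           Max ((\<lambda>i. max \<bar>fst (as!i) - fst (bs!\<gamma> i)\<bar> \<bar>snd (as!i) - snd (bs!\<gamma> i)\<bar>) ` {..<n}))
      else
        (\<Sum>i<n. max (\<bar>fst (as!i) - fst (bs!\<gamma> i)\<bar> powr real_of_ereal p)
                    (\<bar>snd (as!i) - snd (bs!\<gamma> i)\<bar> powr real_of_ereal p))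
          powr (1 / real_of_ereal p))"

definition wdist :: "ereal \<Rightarrow> barcode \<Rightarrow> barcode \<Rightarrow> real" where
  "wdist p A B =
     (let n = max (size A) (size B) in
      Inf {match_cost p n as bs \<gamma> | as bs \<gamma>.
             as \<in> paddings A n \<and> bs \<in> paddings B n \<and> \<gamma> permutes {..<n}})"

end

theory Submission
  imports Defs "HOL-Real_Asymp.Real_Asymp"
begin

text \<open>Persistent entropy is minus the sum of the uniformly continuous function x ln x
  on [0,1] evaluated at the relative lengths of the intervals. After padding both barcodes
  to n \<le> N intervals, a matching of cost c moves every interval length by at most 2c,
  hence the total lengths by at most 2nc; since both totals are at least \<lambda>, every
  relative length moves by O((N+1) c / \<lambda>), and so the entropy moves by at most N times
  the modulus of continuity of x ln x.\<close>

lemma continuous_on_x_ln_x: "continuous_on {0..} (\<lambda>x::real. x * ln x)"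
proof (clarsimp simp: continuous_on_eq_continuous_within)
  fix x :: real
  assume "0 \<le> x"
  show "continuous (at x within {0..}) (\<lambda>x. x * ln x)"
  proof (cases "x = 0")
    case True
    have "((\<lambda>x::real. x * ln x) \<longlongrightarrow> 0) (at_right 0)"
      by real_asymp
    then have "((\<lambda>x::real. x * ln x) \<longlongrightarrow> 0) (at 0 within {0..})"
      by (simp add: at_within_Ici_at_right)
    then show ?thesis
      using True by (simp add: continuous_within)
  next
    case False
    with \<open>0 \<le> x\<close> have "continuous (at x) (\<lambda>x. x * ln x)"
      by (intro continuous_intros) auto
    then show ?thesis
      by (rule continuous_at_imp_continuous_at_within)
  qed
qed

lemma abs_normalized_diff_le:
  fixes l l' :: "nat \<Rightarrow> real"
  assumes nonneg: "\<forall>i<n. 0 \<le> l' i" and "0 < lam"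
    and lam_le: "lam \<le> sum l {..<n}" "lam \<le> sum l' {..<n}"
    and close: "\<forall>i<n. \<bar>l i - l' i\<bar> \<le> \<eta>" and "i < n"
  shows "\<bar>l i / sum l {..<n} - l' i / sum l' {..<n}\<bar> \<le> (n + 1) * \<eta> / lam"
proof -
  define L L' where "L = sum l {..<n}" and "L' = sum l' {..<n}"
  have pos: "0 < L" "0 < L'"
    using assms unfolding L_def L'_def by linarith+
  have q: "0 \<le> l' i / L'" "l' i / L' \<le> 1"
    using nonneg \<open>i < n\<close> pos unfolding L'_def by (auto intro: member_le_sum)
  have "\<bar>L' - L\<bar> = \<bar>\<Sum>j<n. l' j - l j\<bar>"
    unfolding L_def L'_def by (simp add: sum_subtractf)
  also have "\<dots> \<le> (\<Sum>j<n. \<bar>l' j - l j\<bar>)"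
    by (rule sum_abs)
  also have "\<dots> \<le> n * \<eta>"
    using close sum_mono[of "{..<n}" "\<lambda>j. \<bar>l' j - l j\<bar>" "\<lambda>_. \<eta>"]
    by (simp add: abs_minus_commute)
  finally have total: "\<bar>L' - L\<bar> \<le> n * \<eta>" .
  have "l i / L - l' i / L' = (l i - l' i) / L + (l' i / L') * (L' - L) / L"
    using pos by (simp add: field_simps)
  also have "\<bar>\<dots>\<bar> \<le> \<bar>(l i - l' i) / L\<bar> + \<bar>(l' i / L') * (L' - L) / L\<bar>"
    by (rule abs_triangle_ineq)
  also have "\<dots> = \<bar>l i - l' i\<bar> / L + (l' i / L') * \<bar>L' - L\<bar> / L"
    using nonneg \<open>i < n\<close> pos by (simp add: abs_mult)
  also have "\<dots> \<le> \<bar>l i - l' i\<bar> / L + \<bar>L' - L\<bar> / L"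
    using q pos by (intro add_left_mono divide_right_mono mult_left_le_one_le) auto
  also have "\<dots> \<le> \<eta> / lam + n * \<eta> / lam"
    using close \<open>i < n\<close> total pos lam_le \<open>0 < lam\<close> unfolding L_def
    by (intro add_mono frac_le) auto
  also have "\<dots> = (real n + 1) * \<eta> / lam"
    by (simp add: add_divide_distrib algebra_simps)
  finally show ?thesis
    unfolding L_def L'_def .
qed

definition length_entropy :: "nat \<Rightarrow> (nat \<Rightarrow> real) \<Rightarrow> real" where
  "length_entropy n l = - (\<Sum>i<n. l i / sum l {..<n} * ln (l i / sum l {..<n}))"

lemma length_entropy_uniformly_continuous:
  fixes N :: nat and lam \<epsilon> :: real
  assumes "0 < lam" "0 < \<epsilon>"
  obtains \<delta> where "0 < \<delta>"
    "\<And>n l l'. \<lbrakk>n \<le> N; \<forall>i<n. 0 \<le> l i \<and> 0 \<le> l' i; lam \<le> sum l {..<n}; lam \<le> sum l' {..<n};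
        \<forall>i<n. \<bar>l i - l' i\<bar> \<le> \<delta>\<rbrakk> \<Longrightarrow> \<bar>length_entropy n l - length_entropy n l'\<bar> \<le> \<epsilon>"
proof -
  let ?f = "\<lambda>x::real. x * ln x"
  have "uniformly_continuous_on {0..1} ?f"
    by (intro compact_uniformly_continuous continuous_on_subset[OF continuous_on_x_ln_x]) auto
  moreover have "0 < \<epsilon> / (N + 1)"
    using \<open>0 < \<epsilon>\<close> by simp
  ultimately obtain d where "0 < d" and d:
    "\<And>x y. x \<in> {0..1} \<Longrightarrow> y \<in> {0..1} \<Longrightarrow> dist y x < d \<Longrightarrow> dist (?f y) (?f x) < \<epsilon> / (N + 1)"
    unfolding uniformly_continuous_on_def by metis
  show thesis
  proof (rule that)
    show "0 < d * lam / (2 * (N + 1))"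
      using \<open>0 < d\<close> \<open>0 < lam\<close> by simp
  next
    fix n l l'
    assume "n \<le> N" and nonneg: "\<forall>i<n. 0 \<le> l i \<and> 0 \<le> l' i"
      and lam_le: "lam \<le> sum l {..<n}" "lam \<le> sum l' {..<n}"
      and close: "\<forall>i<n. \<bar>l i - l' i\<bar> \<le> d * lam / (2 * (N + 1))"
    define q q' where "q i = l i / sum l {..<n}" and "q' i = l' i / sum l' {..<n}" for i
    have unit: "q i \<in> {0..1}" "q' i \<in> {0..1}" if "i < n" for i
      using nonneg lam_le \<open>0 < lam\<close> that unfolding q_def q'_def
      by (auto intro!: member_le_sum)
    have "\<bar>q i - q' i\<bar> < d" if "i < n" for i
    proof -
      have "\<bar>q i - q' i\<bar> \<le> (real n + 1) * (d * lam / (2 * (N + 1))) / lam"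
        unfolding q_def q'_def
        using nonneg \<open>0 < lam\<close> lam_le close that by (intro abs_normalized_diff_le) auto
      also have "\<dots> = d / 2 * ((real n + 1) / (real N + 1))"
        using \<open>0 < lam\<close> by (simp add: divide_simps)
      also have "\<dots> \<le> d / 2"
        using \<open>n \<le> N\<close> \<open>0 < d\<close> by (intro mult_left_le) auto
      finally show ?thesis
        using \<open>0 < d\<close> by linarith
    qed
    then have "\<bar>?f (q i) - ?f (q' i)\<bar> < \<epsilon> / (N + 1)" if "i < n" for i
      using d[OF unit(2,1)[OF that]] that by (simp add: dist_real_def abs_minus_commute)
    then have term_close: "\<bar>?f (q' i) - ?f (q i)\<bar> \<le> \<epsilon> / (N + 1)" if "i < n" for i
      using that by (simp add: abs_minus_commute less_imp_le)
    have "\<bar>length_entropy n l - length_entropy n l'\<bar> = \<bar>\<Sum>i<n. ?f (q' i) - ?f (q i)\<bar>"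
      unfolding length_entropy_def q_def q'_def by (simp add: sum_subtractf)
    also have "\<dots> \<le> (\<Sum>i<n. \<bar>?f (q' i) - ?f (q i)\<bar>)"
      by (rule sum_abs)
    also have "\<dots> \<le> (\<Sum>i<n. \<epsilon> / (N + 1))"
      using term_close by (intro sum_mono) auto
    also have "\<dots> = \<epsilon> * (real n / (real N + 1))"
      by (simp add: algebra_simps)
    also have "\<dots> \<le> \<epsilon>"
      using \<open>n \<le> N\<close> \<open>0 < \<epsilon>\<close> by (intro mult_left_le) auto
    finally show "\<bar>length_entropy n l - length_entropy n l'\<bar> \<le> \<epsilon>" .
  qed
qed

lemma sum_mset_eq_sum_padding:
  fixes g :: "real \<times> real \<Rightarrow> real"
  assumes "xs \<in> paddings A n" and "\<And>t. g (t, t) = 0"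
  shows "(\<Sum>I\<in>#A. g I) = (\<Sum>i<n. g (xs ! i))"
proof -
  obtain ys zs where xs: "xs = ys @ zs" "mset ys = A" "\<forall>z\<in>set zs. fst z = snd z" "length xs = n"
    using assms(1) unfolding paddings_def by auto
  have "sum_list (map g zs) = 0"
    using xs(3) assms(2) by (induction zs) (auto simp: prod_eq_iff)
  then have "(\<Sum>I\<in>#A. g I) = sum_list (map g xs)"
    using xs(1,2) by (simp flip: sum_mset_sum_list)
  also have "\<dots> = (\<Sum>i<n. g (xs ! i))"
    using xs(4) by (simp add: sum_list_sum_nth atLeast0LessThan)
  finally show ?thesis .
qed

lemma int_length_padding_nonneg:
  assumes "is_barcode A" and "xs \<in> paddings A n" and "i < n"
  shows "0 \<le> int_length (xs ! i)"
proof -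
  obtain ys zs where xs: "xs = ys @ zs" "mset ys = A" "\<forall>z\<in>set zs. fst z = snd z" "length xs = n"
    using assms(2) unfolding paddings_def by auto
  have "xs ! i \<in> set ys \<or> xs ! i \<in> set zs"
    using assms(3) xs(1,4) nth_mem by (metis Un_iff set_append)
  then show ?thesis
    using assms(1) xs(2,3) unfolding is_barcode_def int_length_def
    by (metis diff_ge_0_iff_ge order_refl set_mset_mset)
qed

lemma paddings_nonempty:
  assumes "size A \<le> n"
  shows "paddings A n \<noteq> {}"
proof -
  obtain ys where ys: "mset ys = A"
    using ex_mset by blast
  then have "length ys = size A"
    by (metis size_mset)
  then have "ys @ replicate (n - size A) (0, 0) \<in> paddings A n"
    using assms ys unfolding paddings_def
    by (intro CollectI conjI exI[of _ ys] exI[of _ "replicate (n - size A) (0, 0)"]) auto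
  then show ?thesis
    by blast
qed

lemma pers_entropy_padding:
  assumes "xs \<in> paddings A n" and "\<gamma> permutes {..<n}"
  shows "total_length A = (\<Sum>i<n. int_length (xs ! \<gamma> i))"
    and "pers_entropy A = length_entropy n (\<lambda>i. int_length (xs ! \<gamma> i))"
proof -
  have "total_length A = (\<Sum>i<n. int_length (xs ! i))"
    unfolding total_length_def using assms(1)
    by (rule sum_mset_eq_sum_padding) (simp add: int_length_def)
  then show "total_length A = (\<Sum>i<n. int_length (xs ! \<gamma> i))"
    using sum.permute[OF assms(2), of "\<lambda>i. int_length (xs ! i)"] by simp
  let ?h = "\<lambda>i. int_length (xs ! i) / total_length A * ln (int_length (xs ! i) / total_length A)"
  \<comment> \<open>Since ln 0 = 0, the convention 0 log 0 = 0 needs no case split.\<close>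
  have x_ln_x: "(if q = 0 then 0 else q * ln q) = q * ln q" for q :: real
    by simp
  have "pers_entropy A = - (\<Sum>i<n. ?h i)"
    unfolding pers_entropy_def Let_def x_ln_x
    by (subst sum_mset_eq_sum_padding[OF assms(1)]) (simp_all add: int_length_def)
  also have "\<dots> = - (\<Sum>i<n. ?h (\<gamma> i))"
    using sum.permute[OF assms(2), of ?h] by simp
  finally show "pers_entropy A = length_entropy n (\<lambda>i. int_length (xs ! \<gamma> i))"
    unfolding length_entropy_def \<open>total_length A = (\<Sum>i<n. int_length (xs ! \<gamma> i))\<close> .
qed

lemma match_cost_ge_displacement:
  assumes "1 \<le> p" and "i < n"
  shows "max \<bar>fst (as ! i) - fst (bs ! \<gamma> i)\<bar> \<bar>snd (as ! i) - snd (bs ! \<gamma> i)\<bar> \<le> match_cost p n as bs \<gamma>"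
proof (cases "p = \<infinity>")
  case True
  let ?d = "\<lambda>j. max \<bar>fst (as ! j) - fst (bs ! \<gamma> j)\<bar> \<bar>snd (as ! j) - snd (bs ! \<gamma> j)\<bar>"
  have "?d i \<le> Max (?d ` {..<n})"
    using assms(2) by (intro Max_ge) auto
  then show ?thesis
    using True assms(2) unfolding match_cost_def by simp
next
  case False
  define r where "r = real_of_ereal p"
  have "1 \<le> r"
    using assms(1) False unfolding r_def by (cases p) auto
  define S where "S = (\<Sum>j<n. max (\<bar>fst (as ! j) - fst (bs ! \<gamma> j)\<bar> powr r)
                                  (\<bar>snd (as ! j) - snd (bs ! \<gamma> j)\<bar> powr r))"
  have root_le: "x \<le> S powr (1 / r)" if "0 \<le> x" "x powr r \<le> S" for x :: real
  proof -
    have "x = (x powr r) powr (1 / r)"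
      using \<open>1 \<le> r\<close> \<open>0 \<le> x\<close> by (simp add: powr_powr)
    also have "\<dots> \<le> S powr (1 / r)"
      using \<open>1 \<le> r\<close> that(2) by (intro powr_mono2) auto
    finally show ?thesis .
  qed
  have "max (\<bar>fst (as ! i) - fst (bs ! \<gamma> i)\<bar> powr r) (\<bar>snd (as ! i) - snd (bs ! \<gamma> i)\<bar> powr r) \<le> S"
    unfolding S_def using assms(2) by (intro member_le_sum) (auto simp: le_max_iff_disj)
  moreover have "match_cost p n as bs \<gamma> = S powr (1 / r)"
    using False unfolding match_cost_def S_def r_def by simp
  ultimately show ?thesis
    using root_le by simp
qed

lemma abs_int_length_diff_le_match_cost:
  assumes "1 \<le> p" and "i < n"
  shows "\<bar>int_length (as ! i) - int_length (bs ! \<gamma> i)\<bar> \<le> 2 * match_cost p n as bs \<gamma>"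
  using match_cost_ge_displacement[OF assms, of as bs \<gamma>]
  unfolding int_length_def by (auto simp: abs_le_iff)

lemma match_cost_nonneg:
  assumes "1 \<le> p"
  shows "0 \<le> match_cost p n as bs \<gamma>"
proof (cases "p = \<infinity> \<and> 0 < n")
  case True
  then show ?thesis
    using match_cost_ge_displacement[OF assms, of 0 n as bs \<gamma>] by linarith
next
  case False
  then show ?thesis
    unfolding match_cost_def by auto
qed

lemma wdist_less_imp_matching:
  fixes A B :: barcode
  defines "n \<equiv> max (size A) (size B)"
  assumes "1 \<le> p" and "wdist p A B < c"
  obtains as bs \<gamma> where "as \<in> paddings A n" "bs \<in> paddings B n" "\<gamma> permutes {..<n}"
    "match_cost p n as bs \<gamma> < c"
proof -
  define S where "S = {match_cost p n as bs \<gamma> | as bs \<gamma>.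
    as \<in> paddings A n \<and> bs \<in> paddings B n \<and> \<gamma> permutes {..<n}}"
  obtain as bs where "as \<in> paddings A n" "bs \<in> paddings B n"
    using paddings_nonempty[of A n] paddings_nonempty[of B n] unfolding n_def by auto
  then have "S \<noteq> {}"
    unfolding S_def using permutes_id by blast
  moreover have "bdd_below S"
    unfolding S_def bdd_below_def using match_cost_nonneg[OF assms(2)] by blast
  moreover have "Inf S < c"
    using assms(3) unfolding wdist_def S_def n_def Let_def by simp
  ultimately obtain x where "x \<in> S" "x < c"
    using cInf_less_iff by blast
  then show thesis
    using that unfolding S_def by blast
qed

theorem proposition2:
  fixes p :: ereal and N :: nat and lam :: real
  assumes "1 \<le> p" and "0 < N" and "0 < lam"
  shows "\<forall>\<epsilon>>0. \<exists>\<delta>>0. \<forall>A B.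
           is_barcode A \<and> is_barcode B \<and> size A \<le> N \<and> size B \<le> N \<and>
           total_length A \<ge> lam \<and> total_length B \<ge> lam \<and> wdist p A B \<le> \<delta>
           \<longrightarrow> \<bar>pers_entropy A - pers_entropy B\<bar> \<le> \<epsilon>"
proof (intro allI impI)
  fix \<epsilon> :: real
  assume "0 < \<epsilon>"
  then obtain \<delta> where "0 < \<delta>" and entropy_close:
    "\<And>n l l'. \<lbrakk>n \<le> N; \<forall>i<n. 0 \<le> l i \<and> 0 \<le> l' i; lam \<le> sum l {..<n}; lam \<le> sum l' {..<n};
        \<forall>i<n. \<bar>l i - l' i\<bar> \<le> \<delta>\<rbrakk> \<Longrightarrow> \<bar>length_entropy n l - length_entropy n l'\<bar> \<le> \<epsilon>"
    using length_entropy_uniformly_continuous[OF \<open>0 < lam\<close>] by metis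
  show "\<exists>\<delta>>0. \<forall>A B.
           is_barcode A \<and> is_barcode B \<and> size A \<le> N \<and> size B \<le> N \<and>
           total_length A \<ge> lam \<and> total_length B \<ge> lam \<and> wdist p A B \<le> \<delta>
           \<longrightarrow> \<bar>pers_entropy A - pers_entropy B\<bar> \<le> \<epsilon>"
  proof (intro exI[of _ "\<delta> / 4"] conjI allI impI)
    fix A B
    assume barcodes: "is_barcode A \<and> is_barcode B \<and> size A \<le> N \<and> size B \<le> N \<and>
      total_length A \<ge> lam \<and> total_length B \<ge> lam \<and> wdist p A B \<le> \<delta> / 4"
    define n where "n = max (size A) (size B)"
    have "wdist p A B < \<delta> / 2"
      using barcodes \<open>0 < \<delta>\<close> by linarith
    then obtain as bs \<gamma> where as: "as \<in> paddings A n" and bs: "bs \<in> paddings B n"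
      and \<gamma>: "\<gamma> permutes {..<n}" and cost: "match_cost p n as bs \<gamma> < \<delta> / 2"
      using wdist_less_imp_matching[OF assms(1)] unfolding n_def by blast
    define l l' where "l i = int_length (as ! i)" and "l' i = int_length (bs ! \<gamma> i)" for i
    have "\<bar>length_entropy n l - length_entropy n l'\<bar> \<le> \<epsilon>"
    proof (rule entropy_close)
      show "n \<le> N"
        using barcodes unfolding n_def by simp
      show "\<forall>i<n. 0 \<le> l i \<and> 0 \<le> l' i"
        using barcodes as bs permutes_in_image[OF \<gamma>] unfolding l_def l'_def
        by (auto intro: int_length_padding_nonneg)
      show "\<forall>i<n. \<bar>l i - l' i\<bar> \<le> \<delta>"
        using abs_int_length_diff_le_match_cost[OF assms(1), of _ n as bs \<gamma>] cost
        unfolding l_def l'_def by fastforce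
      show "lam \<le> sum l {..<n}" "lam \<le> sum l' {..<n}"
        using barcodes pers_entropy_padding(1)[OF as permutes_id] pers_entropy_padding(1)[OF bs \<gamma>]
        unfolding l_def l'_def by simp_all
    qed
    moreover have "pers_entropy A = length_entropy n l" "pers_entropy B = length_entropy n l'"
      using pers_entropy_padding(2)[OF as permutes_id] pers_entropy_padding(2)[OF bs \<gamma>]
      unfolding l_def l'_def by simp_all
    ultimately show "\<bar>pers_entropy A - pers_entropy B\<bar> \<le> \<epsilon>"
      by simp
  qed (use \<open>0 < \<delta>\<close> in simp)
qed

end
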